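(* Let $(\Omega,\mathcal F,\mathcal P)$ be pre-Hahn-localizable with $\mathcal P$ convex, and let $\mathcal Q$ and $\mathcal Q'$ be two localizations with corresponding pairwise disjoint support sets $\{S_Q:Q\in\mathcal Q\}$ and $\{T_{Q'}:Q'\in\mathcal Q'\}$. Then $(\mathcal H_{\mathcal F}^{\mathcal Q})^{\mathcal P}=(\mathcal H_{\mathcal F}^{\mathcal Q'})^{\mathcal P}$, where the measures of $\mathcal P$ are extended to the Hahn-extensions in the canonical way.
   Context: $\mathcal P$ is a family of probability measures on $\mathcal F$. $\mathcal P\lll\mathcal Q$ means each $P\in\mathcal P$ is absolutely continuous w.r.t. some $Q\in\mathcal Q$; $\mathrm{sconv}(\mathcal Q)$ denotes countable convex combinations. A localization of $\mathcal P$ is a family $\mathcal Q$ of probability measures on $\mathcal F$ together with support sets $S_Q\in\mathcal F$ such that $Q(S_R)=\delta_{QR}$ for $Q,R\in\mathcal Q$ and $\mathcal Q\lll\mathcal P\lll\mathrm{sconv}(\mathcal Q)$; $\mathcal P$ is pre-Hahn-localizable if a localization exists. The Hahn-extension is $\mathcal H_{\mathcal F}^{\mathcal Q}=\sigma\big(\mathcal F\cup\{\bigcup_{Q\in\mathcal Q}E_Q:E_Q\in\mathcal F,E_Q\subseteq S_Q\}\big)$; each $P\in\mathcal P$ extends to $\mathcal H_{\mathcal F}^{\mathcal Q}$ by $P^{\mathcal Q}(A)=\sum_{Q\in\mathcal Q(P)}P(A\cap S_Q)$, where $\mathcal Q(P)=\{Q\in\mathcal Q:P(S_Q)>0\}$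 is countable. For a σ-algebra $\mathcal G$ carrying the measures of $\mathcal P$, $\mathcal G^{\mathcal P}=\bigcap_{P\in\mathcal P}\{G\cup Z:G\in\mathcal G, Z\subseteq N\in\mathcal G, P(N)=0\}$. *)

theory Defs
  imports "HOL-Probability.Probability"
begin

definition prob_on :: "'a set \<Rightarrow> 'a set set \<Rightarrow> 'a measure \<Rightarrow> bool" where
  "prob_on \<Omega> F P \<longleftrightarrow> prob_space P \<and> space P = \<Omega> \<and> sets P = F"

text \<open>lll A B: each P in A is absolutely continuous w.r.t. some Q in B
  (absolutely_continuous Q P means null sets of Q are null sets of P).\<close>
definition lll :: "'a measure set \<Rightarrow> 'a measure set \<Rightarrow> bool" where
  "lll A B \<longleftrightarrow> (\<forall>P\<in>A. \<exists>Q\<in>B. absolutely_continuous Q P)"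

definition sconv :: "'a set \<Rightarrow> 'a set set \<Rightarrow> 'a measure set \<Rightarrow> 'a measure set" where
  "sconv \<Omega> F \<Q> = {R. prob_on \<Omega> F R \<and>
     (\<exists>(c::nat \<Rightarrow> real) q. (\<forall>n. q n \<in> \<Q> \<and> 0 \<le> c n) \<and> c sums 1 \<and>
        (\<forall>A\<in>F. measure R A = (\<Sum>n. c n * measure (q n) A)))}"

definition is_localization ::
  "'a set \<Rightarrow> 'a set set \<Rightarrow> 'a measure set \<Rightarrow> 'a measure set \<Rightarrow> ('a measure \<Rightarrow> 'a set) \<Rightarrow> bool" where
  "is_localization \<Omega> F \<P> \<Q> S \<longleftrightarrow>
     (\<forall>Q\<in>\<Q>. prob_on \<Omega> F Q \<and> S Q \<in> F) \<and>
     (\<forall>Q\<in>\<Q>. \<forall>R\<in>\<Q>. measure Q (S R) = (if Q = R then 1 else 0)) \<and>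
     lll \<Q> \<P> \<and> lll \<P> (sconv \<Omega> F \<Q>)"

definition pre_hahn_localizable :: "'a set \<Rightarrow> 'a set set \<Rightarrow> 'a measure set \<Rightarrow> bool" where
  "pre_hahn_localizable \<Omega> F \<P> \<longleftrightarrow> (\<exists>\<Q> S. is_localization \<Omega> F \<P> \<Q> S)"

definition convex_family :: "'a set set \<Rightarrow> 'a measure set \<Rightarrow> bool" where
  "convex_family F \<P> \<longleftrightarrow> (\<forall>P1\<in>\<P>. \<forall>P2\<in>\<P>. \<forall>t::real. 0 \<le> t \<and> t \<le> 1 \<longrightarrow>
     (\<exists>P\<in>\<P>. \<forall>A\<in>F. measure P A = t * measure P1 A + (1 - t) * measure P2 A))"

definition hahn_ext :: "'a set \<Rightarrow> 'a set set \<Rightarrow> 'a measure set \<Rightarrow> ('a measure \<Rightarrow> 'a set) \<Rightarrow> 'a set set" where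
  "hahn_ext \<Omega> F \<Q> S = sigma_sets \<Omega>
     (F \<union> {(\<Union>Q\<in>\<Q>. E Q) | E. \<forall>Q\<in>\<Q>. E Q \<in> F \<and> E Q \<subseteq> S Q})"

definition hahn_meas :: "'a measure set \<Rightarrow> ('a measure \<Rightarrow> 'a set) \<Rightarrow> 'a measure \<Rightarrow> 'a set \<Rightarrow> ennreal" where
  "hahn_meas \<Q> S P A = (\<Sum>\<^sub>\<infinity>Q\<in>{Q\<in>\<Q>. 0 < measure P (S Q)}. emeasure P (A \<inter> S Q))"

definition fam_completion ::
  "'a set set \<Rightarrow> ('a measure \<Rightarrow> 'a set \<Rightarrow> ennreal) \<Rightarrow> 'a measure set \<Rightarrow> 'a set set" where
  "fam_completion G \<mu> \<P> = (\<Inter>P\<in>\<P>. {G' \<union> Z | G' Z. G' \<in> G \<and> (\<exists>N\<in>G. Z \<subseteq> N \<and> \<mu> P N = 0)})"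

end

theory Submission
  imports Defs
begin

text \<open>Fix \<open>P \<in> \<P>\<close>. Each \<open>Q \<in> \<Q>\<close> is dominated by a member of \<open>\<P>\<close>, which is dominated by a
  countable mixture of members of \<open>\<Q>'\<close>; hence \<open>S\<^sub>Q\<close> is covered, up to a \<open>P\<close>-null set, by
  countably many supports \<open>T\<^sub>Q\<^sub>'\<close>. Cutting along these covers, every generator \<open>\<Union>\<^sub>Q\<^sub>' E\<^sub>Q\<^sub>'\<close> of
  the Hahn-extension for \<open>\<Q>'\<close> differs from a set of the Hahn-extension for \<open>\<Q>\<close> by a subset of a
  \<open>P\<^sup>\<Q>\<close>-null set, and every \<open>P\<^sup>\<Q>\<^sup>'\<close>-null set lies in a \<open>P\<^sup>\<Q>\<close>-null set. So the \<open>P\<close>-completion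
  for \<open>\<Q>'\<close> is contained in the one for \<open>\<Q>\<close>, and by symmetry they agree for every single \<open>P\<close>.\<close>

lemma sigma_algebra_hahn_ext:
  assumes "sigma_algebra \<Omega> F" and "\<forall>Q\<in>\<Q>. S Q \<in> F"
  shows "sigma_algebra \<Omega> (hahn_ext \<Omega> F \<Q> S)"
proof -
  interpret sigma_algebra \<Omega> F by fact
  show ?thesis
    unfolding hahn_ext_def using assms(2) sets_into_space
    by (intro sigma_algebra_sigma_sets) blast
qed

lemma sets_subset_hahn_ext: "F \<subseteq> hahn_ext \<Omega> F \<Q> S"
  unfolding hahn_ext_def by auto

lemma UN_support_in_hahn_ext:
  assumes "\<And>Q. Q \<in> \<Q> \<Longrightarrow> E Q \<in> F" and "\<And>Q. Q \<in> \<Q> \<Longrightarrow> E Q \<subseteq> S Q"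
  shows "(\<Union>Q\<in>\<Q>. E Q) \<in> hahn_ext \<Omega> F \<Q> S"
  unfolding hahn_ext_def using assms by (intro sigma_sets.Basic) blast

lemma hahn_ext_Int_support:
  assumes "sigma_algebra \<Omega> F" and SF: "\<forall>Q\<in>\<Q>. S Q \<in> F" and disj: "disjoint_family_on S \<Q>"
    and A: "A \<in> hahn_ext \<Omega> F \<Q> S" and Q: "Q \<in> \<Q>"
  shows "A \<inter> S Q \<in> F"
proof -
  interpret sigma_algebra \<Omega> F by fact
  show ?thesis
    using A unfolding hahn_ext_def
  proof induction
    case (Basic A)
    then consider "A \<in> F" | E where "A = (\<Union>Q\<in>\<Q>. E Q)" "\<forall>Q\<in>\<Q>. E Q \<in> F \<and> E Q \<subseteq> S Q"
      by blast
    then show ?case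
    proof cases
      case (2 E)
      have "A \<inter> S Q = E Q"
      proof (intro equalityI subsetI)
        fix x assume "x \<in> A \<inter> S Q"
        then obtain Q' where Q': "Q' \<in> \<Q>" "x \<in> E Q'" "x \<in> S Q" using 2 by blast
        then have "Q' = Q"
          using 2 disj Q by (meson disjoint_family_onD disjoint_iff subsetD)
        then show "x \<in> E Q" using Q' by simp
      qed (use 2 Q in blast)
      then show ?thesis using 2 Q by simp
    qed (use SF Q in blast)
  next
    case (Compl A)
    have "(\<Omega> - A) \<inter> S Q = S Q - A \<inter> S Q"
      using SF Q sets_into_space by blast
    then show ?case using Compl SF Q by auto
  next
    case (Union A)
    have "(\<Union>i. A i) \<inter> S Q = (\<Union>i. A i \<inter> S Q)" by blast
    also have "\<dots> \<in> F" using Union.IH by (intro countable_UN) auto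
    finally show ?case .
  qed simp
qed

lemma hahn_meas_eq_0_iff:
  assumes P: "prob_space P" "sets P = F" and SF: "\<forall>Q\<in>\<Q>. S Q \<in> F"
  shows "hahn_meas \<Q> S P X = 0 \<longleftrightarrow> (\<forall>Q\<in>\<Q>. emeasure P (X \<inter> S Q) = 0)"
proof
  let ?f = "\<lambda>Q. emeasure P (X \<inter> S Q)"
  assume zero: "hahn_meas \<Q> S P X = 0"
  show "\<forall>Q\<in>\<Q>. ?f Q = 0"
  proof
    fix Q assume Q: "Q \<in> \<Q>"
    show "?f Q = 0"
    proof (cases "0 < measure P (S Q)")
      case True
      have "infsum ?f {Q} \<le> infsum ?f {Q\<in>\<Q>. 0 < measure P (S Q)}"
        by (rule infsum_mono_neutral) (use True Q in \<open>auto simp: nonneg_summable_on_complete\<close>)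
      then show ?thesis using zero by (simp add: hahn_meas_def)
    next
      case False
      then have "emeasure P (S Q) = 0"
        using P SF Q measure_nonneg[of P "S Q"]
        by (simp add: finite_measure.emeasure_eq_measure[OF prob_space.finite_measure])
      then show ?thesis using emeasure_mono[of "X \<inter> S Q" "S Q" P] SF Q P by auto
    qed
  qed
qed (unfold hahn_meas_def, intro infsum_0, auto)

lemma is_localizationD:
  assumes "is_localization \<Omega> F \<P> \<Q> S" and "Q \<in> \<Q>"
  shows "prob_space Q" "sets Q = F" "space Q = \<Omega>" "S Q \<in> F"
    and "R \<in> \<Q> \<Longrightarrow> measure Q (S R) = (if Q = R then 1 else 0)"
  using assms unfolding is_localization_def prob_on_def by auto

lemma localization_dominating_sequence:
  assumes loc: "is_localization \<Omega> F \<P> \<Q> S" and P: "P \<in> \<P>"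
  obtains q :: "nat \<Rightarrow> 'a measure" where "\<And>n. q n \<in> \<Q>"
    and "\<And>A. A \<in> F \<Longrightarrow> (\<And>n. measure (q n) A = 0) \<Longrightarrow> A \<in> null_sets P"
proof -
  from loc P obtain R where "R \<in> sconv \<Omega> F \<Q>" and P_ac: "absolutely_continuous R P"
    unfolding is_localization_def lll_def by blast
  then obtain c q where R: "prob_on \<Omega> F R" and q: "\<forall>n. q n \<in> \<Q> \<and> 0 \<le> c n"
    and mixture: "\<forall>A\<in>F. measure R A = (\<Sum>n. c n * measure (q n) A)"
    unfolding sconv_def by blast
  interpret R: prob_space R using R by (simp add: prob_on_def)
  show ?thesis
  proof (rule that)
    show "q n \<in> \<Q>" for n using q by blast
  next
    fix A assume "A \<in> F" and "\<And>n. measure (q n) A = 0"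
    then have "A \<in> null_sets R"
      using R mixture by (auto simp: prob_on_def R.emeasure_eq_measure)
    then show "A \<in> null_sets P" using P_ac unfolding absolutely_continuous_def by blast
  qed
qed

lemma localization_cover:
  assumes "sigma_algebra \<Omega> F" and loc: "is_localization \<Omega> F \<P> \<Q> S" and P: "P \<in> \<P>"
  obtains q :: "nat \<Rightarrow> 'a measure" where "\<And>n. q n \<in> \<Q>" "\<Omega> - (\<Union>n. S (q n)) \<in> null_sets P"
proof -
  interpret sigma_algebra \<Omega> F by fact
  obtain q :: "nat \<Rightarrow> 'a measure" where q: "\<And>n. q n \<in> \<Q>"
    and dominated: "\<And>A. A \<in> F \<Longrightarrow> (\<And>n. measure (q n) A = 0) \<Longrightarrow> A \<in> null_sets P"
    using localization_dominating_sequence[OF loc P] by blast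
  note q_loc = is_localizationD[OF loc q]
  have "measure (q m) (\<Omega> - (\<Union>n. S (q n))) = 0" for m
  proof -
    interpret prob_space "q m" by (fact q_loc)
    have "measure (q m) (\<Omega> - (\<Union>n. S (q n))) \<le> measure (q m) (\<Omega> - S (q m))"
      using q_loc by (intro finite_measure_mono) auto
    also have "\<dots> = 1 - measure (q m) (S (q m))"
      using prob_compl[of "S (q m)"] q_loc by simp
    also have "\<dots> = 0"
      using q_loc(5)[OF q] by simp
    finally show ?thesis by (simp add: measure_le_0_iff)
  qed
  moreover have "\<Omega> - (\<Union>n. S (q n)) \<in> F"
    using q_loc(4) by (intro compl_sets countable_UN) auto
  ultimately show ?thesis
    using that q dominated by blast
qed

lemma localization_null_on_support:
  assumes loc: "is_localization \<Omega> F \<P> \<Q> S" and P: "P \<in> \<P>" and Q: "Q \<in> \<Q>"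
    and E: "E \<in> F" "E \<subseteq> S Q" "E \<in> null_sets Q"
  shows "E \<in> null_sets P"
proof -
  obtain q :: "nat \<Rightarrow> 'a measure" where q: "\<And>n. q n \<in> \<Q>"
    and dominated: "\<And>A. A \<in> F \<Longrightarrow> (\<And>n. measure (q n) A = 0) \<Longrightarrow> A \<in> null_sets P"
    using localization_dominating_sequence[OF loc P] by blast
  have "measure (q n) E = 0" for n
  proof (cases "q n = Q")
    case True
    then show ?thesis using E(3) by (simp add: measure_def null_setsD1)
  next
    case False
    note qn_loc = is_localizationD[OF loc q[of n]]
    interpret prob_space "q n" by (fact qn_loc)
    have "measure (q n) E \<le> measure (q n) (S Q)"
      using qn_loc is_localizationD(4)[OF loc Q] E by (intro finite_measure_mono) auto
    also have "\<dots> = 0"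
      using qn_loc(5)[OF Q] False by simp
    finally show ?thesis by (simp add: measure_le_0_iff)
  qed
  then show ?thesis using dominated E(1) by blast
qed

lemma localization_support_cover:
  assumes sa: "sigma_algebra \<Omega> F"
    and locS: "is_localization \<Omega> F \<P> \<Q> S" and locT: "is_localization \<Omega> F \<P> \<Q>' T"
    and P: "P \<in> \<P>" and Q: "Q \<in> \<Q>"
  obtains q' :: "nat \<Rightarrow> 'a measure"
    where "\<And>n. q' n \<in> \<Q>'" "S Q - (\<Union>n. T (q' n)) \<in> null_sets P"
proof -
  interpret sigma_algebra \<Omega> F by fact
  from locS Q obtain P' where "P' \<in> \<P>" and Q_ac: "absolutely_continuous P' Q"
    unfolding is_localization_def lll_def by blast
  then obtain q' :: "nat \<Rightarrow> 'a measure"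
    where q': "\<And>n. q' n \<in> \<Q>'" and cover: "\<Omega> - (\<Union>n. T (q' n)) \<in> null_sets P'"
    using localization_cover[OF sa locT] by blast
  note Q_loc = is_localizationD[OF locS Q]
  have in_F: "S Q - (\<Union>n. T (q' n)) \<in> F"
    using Q_loc is_localizationD(4)[OF locT q'] by (intro Diff countable_UN) auto
  have "S Q - (\<Union>n. T (q' n)) \<in> null_sets Q"
  proof (rule null_sets_subset)
    show "\<Omega> - (\<Union>n. T (q' n)) \<in> null_sets Q"
      using cover Q_ac unfolding absolutely_continuous_def by blast
    show "S Q - (\<Union>n. T (q' n)) \<in> sets Q"
      using in_F Q_loc by simp
    show "S Q - (\<Union>n. T (q' n)) \<subseteq> \<Omega> - (\<Union>n. T (q' n))"
      using Q_loc sets_into_space by blast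
  qed
  then show ?thesis
    using that q' localization_null_on_support[OF locS P Q in_F] by blast
qed

definition completion_by :: "'a set set \<Rightarrow> 'a set set \<Rightarrow> 'a set set" where
  "completion_by G \<N> = {G' \<union> Z | G' Z. G' \<in> G \<and> (\<exists>N\<in>\<N>. Z \<subseteq> N)}"

lemma completion_byI: "G' \<in> G \<Longrightarrow> N \<in> \<N> \<Longrightarrow> Z \<subseteq> N \<Longrightarrow> G' \<union> Z \<in> completion_by G \<N>"
  unfolding completion_by_def by blast

lemma completion_byE:
  assumes "A \<in> completion_by G \<N>"
  obtains G' Z N where "A = G' \<union> Z" "G' \<in> G" "N \<in> \<N>" "Z \<subseteq> N"
  using assms unfolding completion_by_def by blast

lemma fam_completion_eq_INT_completion_by:
  "fam_completion G \<mu> \<P> = (\<Inter>P\<in>\<P>. completion_by G {N \<in> G. \<mu> P N = 0})"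
  unfolding fam_completion_def completion_by_def by (intro INF_cong refl) auto

lemma sigma_algebra_completion_by:
  assumes "sigma_algebra \<Omega> G" and \<N>: "\<N> \<subseteq> G" "{} \<in> \<N>"
    and UN: "\<And>N. (\<And>i::nat. N i \<in> \<N>) \<Longrightarrow> (\<Union>i. N i) \<in> \<N>"
  shows "sigma_algebra \<Omega> (completion_by G \<N>)"
proof -
  interpret sigma_algebra \<Omega> G by fact
  have "completion_by G \<N> \<subseteq> Pow \<Omega>"
    using sets_into_space \<N>(1) unfolding completion_by_def by blast
  moreover have "{} \<in> completion_by G \<N>"
    using completion_byI[of "{}" G "{}" \<N> "{}"] \<N>(2) by simp
  moreover have "\<Omega> - A \<in> completion_by G \<N>" if A_in: "A \<in> completion_by G \<N>" for A
  proof -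
    obtain G' Z N where A: "A = G' \<union> Z" "G' \<in> G" "N \<in> \<N>" "Z \<subseteq> N"
      using A_in by (rule completion_byE)
    have N_in: "N \<in> G" using A(3) \<N>(1) by blast
    then have "N \<subseteq> \<Omega>" by (rule sets_into_space)
    then have "\<Omega> - A = (\<Omega> - G' - N) \<union> (N - G' - Z)"
      using A(1,4) by blast
    also have "\<dots> \<in> completion_by G \<N>"
      using A(2,3) N_in by (intro completion_byI Diff compl_sets) auto
    finally show ?thesis .
  qed
  moreover have "(\<Union>i. A i) \<in> completion_by G \<N>"
    if A_in: "range A \<subseteq> completion_by G \<N>" for A :: "nat \<Rightarrow> 'a set"
  proof -
    have "\<exists>G' Z N. A i = G' \<union> Z \<and> G' \<in> G \<and> N \<in> \<N> \<and> Z \<subseteq> N" for i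
    proof -
      have "A i \<in> completion_by G \<N>" using A_in by blast
      then show ?thesis by (elim completion_byE) blast
    qed
    then obtain G' Z N where A: "\<And>i. A i = G' i \<union> Z i" "\<And>i. G' i \<in> G" "\<And>i. N i \<in> \<N>"
      "\<And>i. Z i \<subseteq> N i"
      by metis
    have "(\<Union>i. A i) = (\<Union>i. G' i) \<union> (\<Union>i. Z i)" using A(1) by blast
    also have "\<dots> \<in> completion_by G \<N>"
      using A(2,4) UN[of N, OF A(3)] by (intro completion_byI) auto
    finally show ?thesis .
  qed
  ultimately show ?thesis
    unfolding sigma_algebra_iff2 by blast
qed

lemma completion_by_mono:
  assumes "G' \<subseteq> completion_by G \<N>" and "\<And>N'. N' \<in> \<N>' \<Longrightarrow> \<exists>N\<in>\<N>. N' \<subseteq> N"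
    and "\<And>N1 N2. N1 \<in> \<N> \<Longrightarrow> N2 \<in> \<N> \<Longrightarrow> N1 \<union> N2 \<in> \<N>"
  shows "completion_by G' \<N>' \<subseteq> completion_by G \<N>"
proof
  fix A assume "A \<in> completion_by G' \<N>'"
  then obtain G1 Z1 N1 where A: "A = G1 \<union> Z1" "G1 \<in> G'" "N1 \<in> \<N>'" "Z1 \<subseteq> N1"
    by (elim completion_byE)
  obtain N2 where N2: "N2 \<in> \<N>" "N1 \<subseteq> N2" using assms(2) A(3) by blast
  have "G1 \<in> completion_by G \<N>" using assms(1) A(2) by blast
  then obtain G3 Z3 N3 where G1: "G1 = G3 \<union> Z3" "G3 \<in> G" "N3 \<in> \<N>" "Z3 \<subseteq> N3"
    by (rule completion_byE)
  have "G3 \<union> (Z3 \<union> Z1) \<in> completion_by G \<N>"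
    using G1(2) assms(3)[OF G1(3) N2(1)] by (rule completion_byI) (use A(4) G1(4) N2(2) in blast)
  then show "A \<in> completion_by G \<N>"
    by (simp add: A(1) G1(1) Un_assoc)
qed

definition hahn_null_sets ::
  "'a set \<Rightarrow> 'a set set \<Rightarrow> 'a measure set \<Rightarrow> ('a measure \<Rightarrow> 'a set) \<Rightarrow> 'a measure \<Rightarrow> 'a set set"
  where "hahn_null_sets \<Omega> F \<Q> S P = {N \<in> hahn_ext \<Omega> F \<Q> S. \<forall>Q\<in>\<Q>. N \<inter> S Q \<in> null_sets P}"

lemma hahn_null_sets_eq:
  assumes "sigma_algebra \<Omega> F" and "prob_on \<Omega> F P"
    and "\<forall>Q\<in>\<Q>. S Q \<in> F" and "disjoint_family_on S \<Q>"
  shows "{N \<in> hahn_ext \<Omega> F \<Q> S. hahn_meas \<Q> S P N = 0} = hahn_null_sets \<Omega> F \<Q> S P"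
  using assms hahn_meas_eq_0_iff[of P F \<Q> S] hahn_ext_Int_support[OF assms(1,3,4)]
  unfolding hahn_null_sets_def prob_on_def null_sets_def by auto

lemma hahn_null_sets_Un:
  assumes "sigma_algebra \<Omega> F" and "\<forall>Q\<in>\<Q>. S Q \<in> F"
    and "N1 \<in> hahn_null_sets \<Omega> F \<Q> S P" and "N2 \<in> hahn_null_sets \<Omega> F \<Q> S P"
  shows "N1 \<union> N2 \<in> hahn_null_sets \<Omega> F \<Q> S P"
proof -
  interpret H: sigma_algebra \<Omega> "hahn_ext \<Omega> F \<Q> S"
    using sigma_algebra_hahn_ext assms(1,2) by blast
  show ?thesis
    using assms(3,4) unfolding hahn_null_sets_def by (auto simp: Int_Un_distrib2)
qed

lemma sigma_algebra_hahn_completion: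
  assumes "sigma_algebra \<Omega> F" and SF: "\<forall>Q\<in>\<Q>. S Q \<in> F"
  shows "sigma_algebra \<Omega> (completion_by (hahn_ext \<Omega> F \<Q> S) (hahn_null_sets \<Omega> F \<Q> S P))"
proof -
  interpret H: sigma_algebra \<Omega> "hahn_ext \<Omega> F \<Q> S"
    using sigma_algebra_hahn_ext assms by blast
  have UN: "(\<Union>i. N i) \<in> hahn_null_sets \<Omega> F \<Q> S P"
    if N: "\<And>i. N i \<in> hahn_null_sets \<Omega> F \<Q> S P" for N :: "nat \<Rightarrow> 'a set"
    unfolding hahn_null_sets_def
  proof (intro CollectI conjI ballI)
    show "(\<Union>i. N i) \<in> hahn_ext \<Omega> F \<Q> S"
      using N unfolding hahn_null_sets_def by (intro H.countable_UN) auto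
    fix Q assume "Q \<in> \<Q>"
    have "(\<Union>i. N i) \<inter> S Q = (\<Union>i. N i \<inter> S Q)" by blast
    also have "\<dots> \<in> null_sets P"
      using N \<open>Q \<in> \<Q>\<close> unfolding hahn_null_sets_def by (intro null_sets_UN) blast
    finally show "(\<Union>i. N i) \<inter> S Q \<in> null_sets P" .
  qed
  have "hahn_null_sets \<Omega> F \<Q> S P \<subseteq> hahn_ext \<Omega> F \<Q> S"
    unfolding hahn_null_sets_def by blast
  moreover have "{} \<in> hahn_null_sets \<Omega> F \<Q> S P"
    unfolding hahn_null_sets_def by simp
  ultimately show ?thesis
    using UN by (rule sigma_algebra_completion_by[OF H.sigma_algebra_axioms])
qed

lemma hahn_null_set_subset_null_set:
  assumes sa: "sigma_algebra \<Omega> F" and loc: "is_localization \<Omega> F \<P> \<Q> S" and P: "P \<in> \<P>"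
    and N: "N \<in> hahn_null_sets \<Omega> F \<Q> S P"
  obtains M where "M \<in> null_sets P" "N \<subseteq> M"
proof -
  obtain q :: "nat \<Rightarrow> 'a measure"
    where q: "\<And>n. q n \<in> \<Q>" and cover: "\<Omega> - (\<Union>n. S (q n)) \<in> null_sets P"
    using localization_cover[OF sa loc P] by blast
  interpret H: sigma_algebra \<Omega> "hahn_ext \<Omega> F \<Q> S"
    using sigma_algebra_hahn_ext[OF sa] loc unfolding is_localization_def by blast
  have N_sub: "N \<subseteq> \<Omega>" and N_null: "\<And>n. N \<inter> S (q n) \<in> null_sets P"
    using N q H.sets_into_space unfolding hahn_null_sets_def by auto
  have "N \<subseteq> (\<Omega> - (\<Union>n. S (q n))) \<union> (\<Union>n. N \<inter> S (q n))"
    using N_sub by blast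
  moreover have "(\<Omega> - (\<Union>n. S (q n))) \<union> (\<Union>n. N \<inter> S (q n)) \<in> null_sets P"
    using cover N_null by (intro null_sets.Un null_sets_UN)
  ultimately show ?thesis using that by blast
qed

context
  fixes \<Omega> :: "'a set" and F :: "'a set set" and \<P> \<Q> \<Q>' :: "'a measure set"
    and S T :: "'a measure \<Rightarrow> 'a set" and P :: "'a measure"
  assumes sa: "sigma_algebra \<Omega> F"
    and locS: "is_localization \<Omega> F \<P> \<Q> S" and disjS: "disjoint_family_on S \<Q>"
    and locT: "is_localization \<Omega> F \<P> \<Q>' T" and disjT: "disjoint_family_on T \<Q>'"
    and P: "P \<in> \<P>" "sets P = F"
begin

lemma hahn_uncovered_null:
  assumes q: "\<And>Q n. Q \<in> \<Q> \<Longrightarrow> q Q n \<in> \<Q>'"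
    and cover: "\<And>Q. Q \<in> \<Q> \<Longrightarrow> S Q - (\<Union>n::nat. T (q Q n)) \<in> null_sets P"
  shows "(\<Union>Q\<in>\<Q>. S Q - (\<Union>n. T (q Q n))) \<union> (\<Omega> - (\<Union>Q\<in>\<Q>. S Q)) \<in> hahn_null_sets \<Omega> F \<Q> S P"
    (is "?N \<in> _")
proof -
  interpret sigma_algebra \<Omega> F by (fact sa)
  have SF: "\<And>Q. Q \<in> \<Q> \<Longrightarrow> S Q \<in> F" and TF: "\<And>Q'. Q' \<in> \<Q>' \<Longrightarrow> T Q' \<in> F"
    using locS locT unfolding is_localization_def by auto
  interpret H: sigma_algebra \<Omega> "hahn_ext \<Omega> F \<Q> S"
    using sigma_algebra_hahn_ext sa SF by blast
  have N_in: "?N \<in> hahn_ext \<Omega> F \<Q> S"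
    using SF TF q by (intro H.Un H.compl_sets UN_support_in_hahn_ext Diff countable_UN) auto
  have "?N \<inter> S Q \<in> null_sets P" if Q: "Q \<in> \<Q>" for Q
  proof (rule null_sets_subset[OF cover[OF Q]])
    show "?N \<inter> S Q \<in> sets P"
      using hahn_ext_Int_support[OF sa _ disjS N_in Q] SF P(2) by blast
    have "S Q' \<inter> S Q = {}" if "Q' \<in> \<Q>" "Q' \<noteq> Q" for Q'
      using disjS that(1) Q that(2) by (rule disjoint_family_onD)
    then show "?N \<inter> S Q \<subseteq> S Q - (\<Union>n. T (q Q n))"
      using Q by blast
  qed
  then show ?thesis using N_in unfolding hahn_null_sets_def by blast
qed

lemma hahn_generator_in_completion:
  assumes E: "\<And>Q'. Q' \<in> \<Q>' \<Longrightarrow> E Q' \<in> F" "\<And>Q'. Q' \<in> \<Q>' \<Longrightarrow> E Q' \<subseteq> T Q'"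
  shows "(\<Union>Q'\<in>\<Q>'. E Q') \<in> completion_by (hahn_ext \<Omega> F \<Q> S) (hahn_null_sets \<Omega> F \<Q> S P)"
proof -
  interpret sigma_algebra \<Omega> F by (fact sa)
  have SF: "\<And>Q. Q \<in> \<Q> \<Longrightarrow> S Q \<in> F" and TF: "\<And>Q'. Q' \<in> \<Q>' \<Longrightarrow> T Q' \<in> F"
    using locS locT unfolding is_localization_def by auto
  have "\<exists>q' :: nat \<Rightarrow> 'a measure. (\<forall>n. q' n \<in> \<Q>') \<and> S Q - (\<Union>n. T (q' n)) \<in> null_sets P"
    if "Q \<in> \<Q>" for Q
    using localization_support_cover[OF sa locS locT P(1) that] by metis
  then obtain q :: "'a measure \<Rightarrow> nat \<Rightarrow> 'a measure"
    where q: "\<And>Q n. Q \<in> \<Q> \<Longrightarrow> q Q n \<in> \<Q>'"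
      and cover: "\<And>Q. Q \<in> \<Q> \<Longrightarrow> S Q - (\<Union>n. T (q Q n)) \<in> null_sets P"
    by metis
  define G where "G = (\<Union>Q\<in>\<Q>. S Q \<inter> (\<Union>n. E (q Q n)))"
  define N where "N = (\<Union>Q\<in>\<Q>. S Q - (\<Union>n. T (q Q n))) \<union> (\<Omega> - (\<Union>Q\<in>\<Q>. S Q))"
  have "G \<in> hahn_ext \<Omega> F \<Q> S"
    unfolding G_def using SF E(1) q by (intro UN_support_in_hahn_ext Int countable_UN) auto
  moreover have "N \<in> hahn_null_sets \<Omega> F \<Q> S P"
    unfolding N_def using q cover by (rule hahn_uncovered_null)
  moreover have "(\<Union>Q'\<in>\<Q>'. E Q') - G \<subseteq> N"
  proof
    fix x assume x: "x \<in> (\<Union>Q'\<in>\<Q>'. E Q') - G"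
    then obtain Q' where Q': "Q' \<in> \<Q>'" "x \<in> E Q'" by blast
    then have "x \<in> \<Omega>" using E(2) TF sets_into_space by blast
    show "x \<in> N"
    proof (cases "\<exists>Q\<in>\<Q>. x \<in> S Q")
      case True
      then obtain Q where Q: "Q \<in> \<Q>" "x \<in> S Q" by blast
      have "x \<notin> T (q Q n)" for n
      proof
        assume "x \<in> T (q Q n)"
        then have "q Q n = Q'"
          using disjT q[OF Q(1)] Q' E(2) by (meson disjoint_family_onD disjoint_iff subsetD)
        then show False using x Q Q' unfolding G_def by blast
      qed
      then show ?thesis using Q unfolding N_def by blast
    next
      case False
      then show ?thesis using \<open>x \<in> \<Omega>\<close> unfolding N_def by blast
    qed
  qed
  moreover have "G \<subseteq> (\<Union>Q'\<in>\<Q>'. E Q')"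
    using q unfolding G_def by blast
  ultimately show ?thesis
    using completion_byI[of G "hahn_ext \<Omega> F \<Q> S" N _ "(\<Union>Q'\<in>\<Q>'. E Q') - G"]
    by (simp add: Un_absorb1)
qed

lemma hahn_ext_subset_completion:
  "hahn_ext \<Omega> F \<Q>' T \<subseteq> completion_by (hahn_ext \<Omega> F \<Q> S) (hahn_null_sets \<Omega> F \<Q> S P)"
proof -
  have SF: "\<forall>Q\<in>\<Q>. S Q \<in> F" using locS unfolding is_localization_def by auto
  have "{} \<in> hahn_null_sets \<Omega> F \<Q> S P"
    unfolding hahn_null_sets_def hahn_ext_def by (simp add: sigma_sets.Empty)
  then have "A \<in> completion_by (hahn_ext \<Omega> F \<Q> S) (hahn_null_sets \<Omega> F \<Q> S P)" if "A \<in> F" for A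
    using completion_byI[OF subsetD[OF sets_subset_hahn_ext that], of "{}" _ "{}"] by simp
  moreover have "(\<Union>Q'\<in>\<Q>'. E Q') \<in> completion_by (hahn_ext \<Omega> F \<Q> S) (hahn_null_sets \<Omega> F \<Q> S P)"
    if "\<forall>Q'\<in>\<Q>'. E Q' \<in> F \<and> E Q' \<subseteq> T Q'" for E
    using that by (intro hahn_generator_in_completion) auto
  ultimately show ?thesis
    unfolding hahn_ext_def[of \<Omega> F \<Q>' T]
    by (intro sigma_algebra.sigma_sets_subset[OF sigma_algebra_hahn_completion[OF sa SF]]) blast
qed

lemma hahn_null_set_covered:
  assumes N': "N' \<in> hahn_null_sets \<Omega> F \<Q>' T P"
  shows "\<exists>N\<in>hahn_null_sets \<Omega> F \<Q> S P. N' \<subseteq> N"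
proof -
  have SF: "\<forall>Q\<in>\<Q>. S Q \<in> F" using locS unfolding is_localization_def by auto
  have "N' \<in> completion_by (hahn_ext \<Omega> F \<Q> S) (hahn_null_sets \<Omega> F \<Q> S P)"
    using hahn_ext_subset_completion N' unfolding hahn_null_sets_def by blast
  then obtain G Z N where N'_eq: "N' = G \<union> Z" and G: "G \<in> hahn_ext \<Omega> F \<Q> S"
    and N: "N \<in> hahn_null_sets \<Omega> F \<Q> S P" "Z \<subseteq> N"
    by (rule completion_byE)
  obtain M where M: "M \<in> null_sets P" "N' \<subseteq> M"
    using hahn_null_set_subset_null_set[OF sa locT P(1) N'] by blast
  have "G \<inter> S Q \<in> null_sets P" if "Q \<in> \<Q>" for Q
  proof (rule null_sets_subset[OF M(1)])
    show "G \<inter> S Q \<in> sets P"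
      using hahn_ext_Int_support[OF sa SF disjS G that] P(2) by simp
    show "G \<inter> S Q \<subseteq> M"
      using M(2) N'_eq by blast
  qed
  then have "G \<in> hahn_null_sets \<Omega> F \<Q> S P"
    using G unfolding hahn_null_sets_def by blast
  then have "G \<union> N \<in> hahn_null_sets \<Omega> F \<Q> S P"
    using N(1) by (rule hahn_null_sets_Un[OF sa SF])
  moreover have "N' \<subseteq> G \<union> N"
    using N'_eq N(2) by blast
  ultimately show ?thesis by blast
qed

lemma hahn_completion_subset:
  "completion_by (hahn_ext \<Omega> F \<Q>' T) (hahn_null_sets \<Omega> F \<Q>' T P)
     \<subseteq> completion_by (hahn_ext \<Omega> F \<Q> S) (hahn_null_sets \<Omega> F \<Q> S P)"
  using locS unfolding is_localization_def
  by (intro completion_by_mono hahn_ext_subset_completion hahn_null_set_covered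
      hahn_null_sets_Un[OF sa]) auto

end

lemma fam_completion_hahn_ext:
  assumes "sigma_algebra \<Omega> F" and "\<forall>P\<in>\<P>. prob_on \<Omega> F P"
    and "is_localization \<Omega> F \<P> \<Q> S" and "disjoint_family_on S \<Q>"
  shows "fam_completion (hahn_ext \<Omega> F \<Q> S) (hahn_meas \<Q> S) \<P>
    = (\<Inter>P\<in>\<P>. completion_by (hahn_ext \<Omega> F \<Q> S) (hahn_null_sets \<Omega> F \<Q> S P))"
  using assms hahn_null_sets_eq[OF assms(1)]
  unfolding fam_completion_eq_INT_completion_by is_localization_def by simp

theorem corollary4p8:
  fixes \<Omega> :: "'a set" and F :: "'a set set" and \<P> \<Q> \<Q>' :: "'a measure set"
    and S T :: "'a measure \<Rightarrow> 'a set"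
  assumes "sigma_algebra \<Omega> F"
    and "\<forall>P\<in>\<P>. prob_on \<Omega> F P"
    and "pre_hahn_localizable \<Omega> F \<P>"
    and "convex_family F \<P>"
    and "is_localization \<Omega> F \<P> \<Q> S" and "disjoint_family_on S \<Q>"
    and "is_localization \<Omega> F \<P> \<Q>' T" and "disjoint_family_on T \<Q>'"
  shows "fam_completion (hahn_ext \<Omega> F \<Q> S) (hahn_meas \<Q> S) \<P>
       = fam_completion (hahn_ext \<Omega> F \<Q>' T) (hahn_meas \<Q>' T) \<P>"
proof -
  have "completion_by (hahn_ext \<Omega> F \<Q> S) (hahn_null_sets \<Omega> F \<Q> S P)
      = completion_by (hahn_ext \<Omega> F \<Q>' T) (hahn_null_sets \<Omega> F \<Q>' T P)" if P: "P \<in> \<P>" for P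
  proof -
    have "sets P = F" using assms(2) P unfolding prob_on_def by blast
    then show ?thesis
      using hahn_completion_subset[OF assms(1,5,6,7,8) P] hahn_completion_subset[OF assms(1,7,8,5,6) P]
      by blast
  qed
  then show ?thesis
    unfolding fam_completion_hahn_ext[OF assms(1,2,5,6)] fam_completion_hahn_ext[OF assms(1,2,7,8)]
    by (intro INF_cong refl)
qed

end
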